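(* Let $a_{n,k}$ be the number of shallow $321$-avoiding permutations in $S_n$ with exactly $k$ descents, and let $A(x,z)=\sum_{n\ge 1,k\ge0}a_{n,k}x^kz^n$. Then $$A(x,z)=\frac{z-2z^2+xz^2+z^3-xz^3}{1-3z+3z^2-2xz^2-z^3+xz^3}.$$
   Context: For $\pi\in S_n$: $D(\pi)=\sum_{i}|\pi_i-i|$, $I(\pi)$ is the number of inversions, $T(\pi)=n-\mathrm{cyc}(\pi)$ with $\mathrm{cyc}$ the number of cycles in the disjoint cycle decomposition; $\pi$ is shallow if $I(\pi)+T(\pi)=D(\pi)$. A permutation avoids a pattern $\sigma$ if it has no subsequence order-isomorphic to $\sigma$. A descent of $\pi$ is an index $i\in[n-1]$ with $\pi_i>\pi_{i+1}$. *)

theory Defs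
  imports "HOL-Combinatorics.Permutations" "HOL-Computational_Algebra.Formal_Power_Series"
begin

text \<open>Permutations of [n] = {1..n} are functions \<pi> with \<pi> permutes {1..n}.\<close>

definition disp :: "nat \<Rightarrow> (nat \<Rightarrow> nat) \<Rightarrow> nat" where
  "disp n \<pi> = (\<Sum>i\<in>{1..n}. nat \<bar>int (\<pi> i) - int i\<bar>)"

definition inv_count :: "nat \<Rightarrow> (nat \<Rightarrow> nat) \<Rightarrow> nat" where
  "inv_count n \<pi> = card {(i, j). i \<in> {1..n} \<and> j \<in> {1..n} \<and> i < j \<and> \<pi> i > \<pi> j}"

definition cyc :: "nat \<Rightarrow> (nat \<Rightarrow> nat) \<Rightarrow> nat" where
  "cyc n \<pi> = card ((\<lambda>i. {(\<pi> ^^ k) i | k. True}) ` {1..n})"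

definition refl_len :: "nat \<Rightarrow> (nat \<Rightarrow> nat) \<Rightarrow> nat" where
  "refl_len n \<pi> = n - cyc n \<pi>"

definition shallow :: "nat \<Rightarrow> (nat \<Rightarrow> nat) \<Rightarrow> bool" where
  "shallow n \<pi> \<longleftrightarrow> inv_count n \<pi> + refl_len n \<pi> = disp n \<pi>"

definition avoids321 :: "nat \<Rightarrow> (nat \<Rightarrow> nat) \<Rightarrow> bool" where
  "avoids321 n \<pi> \<longleftrightarrow> \<not> (\<exists>i j k. 1 \<le> i \<and> i < j \<and> j < k \<and> k \<le> n \<and> \<pi> i > \<pi> j \<and> \<pi> j > \<pi> k)"

definition descents :: "nat \<Rightarrow> (nat \<Rightarrow> nat) \<Rightarrow> nat" where
  "descents n \<pi> = card {i. 1 \<le> i \<and> i < n \<and> \<pi> i > \<pi> (Suc i)}"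

definition a_cnt :: "nat \<Rightarrow> nat \<Rightarrow> nat" where
  "a_cnt n k = card {\<pi>. \<pi> permutes {1..n} \<and> shallow n \<pi> \<and> avoids321 n \<pi> \<and> descents n \<pi> = k}"

text \<open>The bivariate generating function, specialised at a real value of x, as a formal
  power series in z. (A permutation in S_n has at most n-1 descents.)\<close>
definition A_gf :: "real \<Rightarrow> real fps" where
  "A_gf x = Abs_fps (\<lambda>n. if n = 0 then 0 else (\<Sum>k<n. real (a_cnt n k) * x ^ k))"

end

(*
  Write a permutation of {1..m+1} that moves m+1 as \<sigma> \<circ> (j m+1) with \<sigma> a permutation of
  {1..m}: the value m+1 is written at position j and \<sigma> j is moved to the end. This insertion
  keeps the number of cycles, increases D by 2(m+1 - max j (\<sigma> j)) and I by 2r+1, where r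
  counts the larger entries to the right of position j. Hence the defect D - I - T grows by
  2(m - max j (\<sigma> j) - r) \<ge> 0, which gives the Diaconis-Graham inequality and shows that the
  result is shallow iff \<sigma> is and r = m - max j (\<sigma> j). A 321-avoiding result has r = 0, so a
  shallow 321-avoiding permutation of {1..m+1} either fixes m+1, or arises from a shallow
  321-avoiding \<sigma> by inserting m+1 before the last entry, or by replacing the value m by m+1
  and appending m. Following descents through these three cases gives the recurrence
  W(m+3) = 3 W(m+2) + (2x - 3) W(m+1) + (1 - x) W(m) for the descent polynomials, whose
  generating function is the stated rational function.
*)

theory Submission
  imports Defs "HOL-Combinatorics.Orbits"
begin

section \<open>Inserting a new maximum\<close>

lemma permutes_atLeastAtMost_le:
  "\<pi> permutes {1..n} \<Longrightarrow> k \<in> {1..n} \<Longrightarrow> 1 \<le> \<pi> k \<and> \<pi> k \<le> n"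
  using permutes_in_image by fastforce

lemma permutes_fixes_Suc:
  "\<sigma> permutes {1..m} \<Longrightarrow> \<sigma> (Suc m) = Suc m"
  by (simp add: permutes_not_in)

lemma permutes_Suc_fixed_last:
  assumes "\<pi> permutes {1..Suc m}" "\<pi> (Suc m) = Suc m"
  shows "\<pi> permutes {1..m}"
  by (rule permutes_superset[OF assms(1)]) (use assms(2) in \<open>auto simp: le_Suc_eq\<close>)

text \<open>\<open>\<sigma> \<circ> transpose j (Suc m)\<close> is \<open>\<sigma>\<close> with \<open>m+1\<close> written at position \<open>j\<close> and \<open>\<sigma> j\<close> moved to
  position \<open>m+1\<close>.\<close>
lemma permutes_Suc_insert:
  assumes "\<sigma> permutes {1..m}" "j \<in> {1..m}"
  shows "\<sigma> \<circ> transpose j (Suc m) permutes {1..Suc m}"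
proof -
  have "\<sigma> permutes {1..Suc m}" using assms(1) by (rule permutes_subset) auto
  moreover have "transpose j (Suc m) permutes {1..Suc m}" using assms(2) by (intro permutes_swap_id) auto
  ultimately show ?thesis by (simp add: permutes_compose)
qed

lemma permutes_Suc_decompose:
  assumes \<pi>: "\<pi> permutes {1..Suc m}" and moved: "\<pi> (Suc m) \<noteq> Suc m"
  defines "j \<equiv> inv \<pi> (Suc m)"
  shows "j \<in> {1..m}" "\<pi> \<circ> transpose j (Suc m) permutes {1..m}"
    "\<pi> = (\<pi> \<circ> transpose j (Suc m)) \<circ> transpose j (Suc m)"
proof -
  have \<pi>j: "\<pi> j = Suc m" unfolding j_def by (meson \<pi> permutes_inverses(1))
  have "j \<in> {1..Suc m}" using \<pi>j moved \<pi> by (metis permutes_not_in)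
  then show j: "j \<in> {1..m}" using \<pi>j moved by (auto simp: le_Suc_eq)
  have "\<pi> \<circ> transpose j (Suc m) permutes {1..Suc m}"
    using \<pi> j by (intro permutes_compose permutes_swap_id) auto
  then show "\<pi> \<circ> transpose j (Suc m) permutes {1..m}"
    by (rule permutes_Suc_fixed_last) (simp add: \<pi>j)
  show "\<pi> = (\<pi> \<circ> transpose j (Suc m)) \<circ> transpose j (Suc m)"
    by (simp add: fun_eq_iff)
qed

lemma insert_transpose_apply:
  assumes "\<sigma> permutes {1..m}"
  shows "(\<sigma> \<circ> transpose j (Suc m)) j = Suc m"
    and "(\<sigma> \<circ> transpose j (Suc m)) (Suc m) = \<sigma> j"
    and "k \<noteq> j \<Longrightarrow> k \<noteq> Suc m \<Longrightarrow> (\<sigma> \<circ> transpose j (Suc m)) k = \<sigma> k"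
  using permutes_fixes_Suc[OF assms] by auto

lemma inv_insert_transpose:
  assumes \<sigma>: "\<sigma> permutes {1..m}" and j: "j \<in> {1..m}"
  shows "inv (\<sigma> \<circ> transpose j (Suc m)) (Suc m) = j"
  using permutes_inv_eq[OF permutes_Suc_insert[OF \<sigma> j]] insert_transpose_apply(1)[OF \<sigma>] by blast

lemma permutes_position_of_max:
  assumes \<sigma>: "\<sigma> permutes {1..m}" and moved: "\<sigma> m \<noteq> m"
  shows "inv \<sigma> m \<in> {1..m}" "inv \<sigma> m \<noteq> m" "\<sigma> (inv \<sigma> m) = m"
proof -
  show \<sigma>j: "\<sigma> (inv \<sigma> m) = m" by (rule permutes_inverses(1)[OF \<sigma>])
  then show "inv \<sigma> m \<noteq> m" using moved by auto
  with \<sigma>j show "inv \<sigma> m \<in> {1..m}" using permutes_not_in[OF \<sigma>] by fastforce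
qed

lemma permutes_Suc_cases:
  assumes "\<pi> permutes {1..Suc m}"
  obtains "\<pi> permutes {1..m}"
    | \<sigma> j where "\<sigma> permutes {1..m}" "j \<in> {1..m}" "\<pi> = \<sigma> \<circ> transpose j (Suc m)"
proof (cases "\<pi> (Suc m) = Suc m")
  case True
  then show ?thesis using that(1) permutes_Suc_fixed_last[OF assms] by blast
next
  case False
  then show ?thesis using that(2) permutes_Suc_decompose[OF assms] by blast
qed

section \<open>Cycles\<close>

lemma cyc_eq_card_orbits:
  "permutation \<pi> \<Longrightarrow> cyc n \<pi> = card (orbit \<pi> ` {1..n})"
  by (simp add: cyc_def orbit_altdef_permutation)

lemma cyc_le: "permutation \<pi> \<Longrightarrow> cyc n \<pi> \<le> n"
  using card_image_le[of "{1..n}" "orbit \<pi>"] by (simp add: cyc_eq_card_orbits)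

lemma orbit_eq_if_mem:
  "permutation \<pi> \<Longrightarrow> y \<in> orbit \<pi> x \<Longrightarrow> orbit \<pi> y = orbit \<pi> x"
  by (meson cyclic_on_orbit' orbit_cyclic_eq3)

lemma cyc_Suc_fixed:
  assumes \<sigma>: "\<sigma> permutes {1..m}"
  shows "cyc (Suc m) \<sigma> = Suc (cyc m \<sigma>)"
proof -
  have perm: "permutation \<sigma>" using \<sigma> by (auto simp: permutation_permutes)
  have "orbit \<sigma> (Suc m) = {Suc m}"
    by (simp add: orbit_eq_singleton_iff permutes_fixes_Suc[OF \<sigma>])
  moreover have "{Suc m} \<notin> orbit \<sigma> ` {1..m}"
    using permutes_orbit_subset[OF \<sigma>] by fastforce
  ultimately show ?thesis
    using perm by (simp add: cyc_eq_card_orbits atLeastAtMostSuc_conv)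
qed

text \<open>In cycle notation, the insertion splices \<open>m+1\<close> into the cycle of \<open>j\<close>, right after \<open>j\<close>.\<close>
lemma orbit_insert_transpose:
  assumes \<sigma>: "\<sigma> permutes {1..m}" and j: "j \<in> {1..m}"
  defines "\<pi> \<equiv> \<sigma> \<circ> transpose j (Suc m)"
  shows "orbit \<pi> j = insert (Suc m) (orbit \<sigma> j)"
proof
  note \<pi>_simps = insert_transpose_apply[OF \<sigma>, where j = j, folded \<pi>_def]
  have \<sigma>n: "\<sigma> (Suc m) = Suc m" by (rule permutes_fixes_Suc[OF \<sigma>])
  show "orbit \<pi> j \<subseteq> insert (Suc m) (orbit \<sigma> j)"
  proof
    fix y assume "y \<in> orbit \<pi> j"
    then show "y \<in> insert (Suc m) (orbit \<sigma> j)"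
    proof induction
      case base show ?case by (simp add: \<pi>_simps)
    next
      case (step y)
      consider "y = j" | "y = Suc m" | "y \<noteq> j" "y \<noteq> Suc m" "y \<in> orbit \<sigma> j"
        using step.IH by blast
      then show ?case
      proof cases
        case 3
        then show ?thesis by (simp add: \<pi>_simps(3) orbit.step)
      qed (simp_all add: \<pi>_simps orbit.base)
    qed
  qed
  have n_in: "Suc m \<in> orbit \<pi> j" by (metis orbit.base \<pi>_simps(1))
  have "orbit \<sigma> j \<subseteq> orbit \<pi> j"
  proof
    fix y assume "y \<in> orbit \<sigma> j"
    then show "y \<in> orbit \<pi> j"
    proof induction
      case base show ?case using n_in by (metis orbit.step \<pi>_simps(2))
    next
      case (step y)
      consider "y = j" | "y = Suc m" | "y \<noteq> j" "y \<noteq> Suc m"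
        by blast
      then show ?case
      proof cases
        case 1
        then show ?thesis using orbit.step[OF n_in] by (simp add: \<pi>_simps(2))
      next
        case 3
        then show ?thesis using orbit.step[OF step.IH] by (simp add: \<pi>_simps(3))
      qed (simp add: \<sigma>n n_in)
    qed
  qed
  with n_in show "insert (Suc m) (orbit \<sigma> j) \<subseteq> orbit \<pi> j" by simp
qed

lemma orbit_insert_transpose_disjoint:
  assumes \<sigma>: "\<sigma> permutes {1..m}" and i: "i \<in> {1..m}" and j: "j \<notin> orbit \<sigma> i"
  shows "orbit (\<sigma> \<circ> transpose j (Suc m)) i = orbit \<sigma> i"
proof (rule orbit_cong)
  have "permutation \<sigma>" using \<sigma> by (auto simp: permutation_permutes)
  then show "i \<in> orbit \<sigma> i" by (rule permutation_self_in_orbit)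
  fix s assume "s \<in> orbit \<sigma> i"
  then have "s \<noteq> j" "s \<noteq> Suc m" using j permutes_orbit_subset[OF \<sigma> i] by auto
  then show "(\<sigma> \<circ> transpose j (Suc m)) s = \<sigma> s" by (rule insert_transpose_apply(3)[OF \<sigma>])
qed

lemma cyc_Suc_insert:
  assumes \<sigma>: "\<sigma> permutes {1..m}" and j: "j \<in> {1..m}"
  shows "cyc (Suc m) (\<sigma> \<circ> transpose j (Suc m)) = cyc m \<sigma>"
proof -
  define \<pi> where "\<pi> = \<sigma> \<circ> transpose j (Suc m)"
  define C where "C = orbit \<sigma> j"
  define h where "h S = (if j \<in> S then insert (Suc m) S else S)" for S
  have perm\<sigma>: "permutation \<sigma>" using \<sigma> by (auto simp: permutation_permutes)
  have perm\<pi>: "permutation \<pi>"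
    using permutes_Suc_insert[OF \<sigma> j] by (auto simp: \<pi>_def permutation_permutes)
  have \<pi>C: "orbit \<pi> j = insert (Suc m) C"
    unfolding \<pi>_def C_def by (rule orbit_insert_transpose[OF \<sigma> j])
  have orbit_\<pi>: "orbit \<pi> i = h (orbit \<sigma> i)" if i: "i \<in> {1..m}" for i
  proof (cases "i \<in> C")
    case True
    have "orbit \<sigma> i = C"
      using orbit_eq_if_mem[OF perm\<sigma>] True by (simp add: C_def)
    moreover have "orbit \<pi> i = orbit \<pi> j"
      using orbit_eq_if_mem[OF perm\<pi>, of i j] \<pi>C True by simp
    moreover have "j \<in> C"
      using perm\<sigma> by (simp add: C_def permutation_self_in_orbit)
    ultimately show ?thesis using \<pi>C by (simp add: h_def)
  next
    case False
    then have j_notin: "j \<notin> orbit \<sigma> i"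
      using orbit_eq_if_mem[OF perm\<sigma>] perm\<sigma> by (metis C_def permutation_self_in_orbit)
    then show ?thesis
      using orbit_insert_transpose_disjoint[OF \<sigma> i] by (simp add: h_def \<pi>_def)
  qed
  have "orbit \<pi> (Suc m) = orbit \<pi> j"
    using orbit_eq_if_mem[OF perm\<pi>, of "Suc m" j] \<pi>C by simp
  then have "orbit \<pi> (Suc m) \<in> orbit \<pi> ` {1..m}"
    using j by blast
  then have "orbit \<pi> ` {1..Suc m} = orbit \<pi> ` {1..m}"
    by (simp add: atLeastAtMostSuc_conv insert_absorb)
  also have "\<dots> = h ` orbit \<sigma> ` {1..m}"
    unfolding image_image by (rule image_cong[OF refl orbit_\<pi>])
  finally have "orbit \<pi> ` {1..Suc m} = h ` orbit \<sigma> ` {1..m}" .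
  moreover have "inj_on h (orbit \<sigma> ` {1..m})"
  proof (rule inj_on_inverseI)
    fix S assume "S \<in> orbit \<sigma> ` {1..m}"
    then have "Suc m \<notin> S" using permutes_orbit_subset[OF \<sigma>] by fastforce
    then show "h S - {Suc m} = S" by (simp add: h_def)
  qed
  ultimately show ?thesis
    using perm\<sigma> perm\<pi> by (simp add: cyc_eq_card_orbits card_image \<pi>_def)
qed

section \<open>Displacement, inversions and the Diaconis--Graham inequality\<close>

lemma disp_Suc_fixed:
  "\<sigma> permutes {1..m} \<Longrightarrow> disp (Suc m) \<sigma> = disp m \<sigma>"
  by (simp add: disp_def permutes_fixes_Suc)

lemma disp_Suc_insert:
  assumes \<sigma>: "\<sigma> permutes {1..m}" and j: "j \<in> {1..m}"
  shows "int (disp (Suc m) (\<sigma> \<circ> transpose j (Suc m)))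
    = int (disp m \<sigma>) + 2 * (int m + 1 - int (max j (\<sigma> j)))"
proof -
  define \<pi> where "\<pi> = \<sigma> \<circ> transpose j (Suc m)"
  define d where "d p k = nat \<bar>int (p k) - int k\<bar>" for p and k :: nat
  note \<pi>_simps = insert_transpose_apply[OF \<sigma>, where j = j, folded \<pi>_def]
  have \<sigma>j: "1 \<le> \<sigma> j \<and> \<sigma> j \<le> m" using permutes_atLeastAtMost_le[OF \<sigma> j] .
  have rest: "sum (d \<pi>) ({1..m} - {j}) = sum (d \<sigma>) ({1..m} - {j})"
    by (rule sum.cong) (auto simp: d_def \<pi>_simps(3))
  have "disp (Suc m) \<pi> = d \<pi> (Suc m) + d \<pi> j + sum (d \<pi>) ({1..m} - {j})"
    using j by (simp add: disp_def d_def[abs_def] sum.remove)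
  moreover have "disp m \<sigma> = d \<sigma> j + sum (d \<sigma>) ({1..m} - {j})"
    using j by (simp add: disp_def d_def[abs_def] sum.remove)
  moreover have "d \<pi> (Suc m) = Suc m - \<sigma> j" "d \<pi> j = Suc m - j"
    using \<sigma>j j by (auto simp: d_def \<pi>_simps)
  moreover have "int (d \<sigma> j) = \<bar>int (\<sigma> j) - int j\<bar>"
    by (simp add: d_def)
  ultimately show ?thesis
    using rest \<sigma>j j unfolding \<pi>_def[symmetric] by (cases "\<sigma> j \<le> j") (simp_all add: max_def)
qed

definition larger_left :: "(nat \<Rightarrow> nat) \<Rightarrow> nat \<Rightarrow> nat set" where
  "larger_left p k = {i. 1 \<le> i \<and> i < k \<and> p k < p i}"

definition larger_right :: "nat \<Rightarrow> (nat \<Rightarrow> nat) \<Rightarrow> nat \<Rightarrow> nat set" where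
  "larger_right n p k = {i. k < i \<and> i \<le> n \<and> p k < p i}"

lemma finite_larger_left [simp]: "finite (larger_left p k)"
  by (rule finite_subset[of _ "{..<k}"]) (auto simp: larger_left_def)

lemma finite_larger_right [simp]: "finite (larger_right n p k)"
  by (rule finite_subset[of _ "{..n}"]) (auto simp: larger_right_def)

lemma card_larger_right_le:
  assumes \<sigma>: "\<sigma> permutes {1..m}" and j: "j \<in> {1..m}"
  shows "card (larger_right m \<sigma> j) \<le> m - max j (\<sigma> j)"
proof -
  let ?R = "larger_right m \<sigma> j"
  have "?R \<subseteq> {j<..m}" by (auto simp: larger_right_def)
  then have "card ?R \<le> m - j"
    using card_mono[OF finite_greaterThanAtMost] by fastforce
  moreover have "\<sigma> k \<in> {\<sigma> j<..m}" if "k \<in> ?R" for k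
    using that j permutes_atLeastAtMost_le[OF \<sigma>, of k] by (simp add: larger_right_def)
  then have "\<sigma> ` ?R \<subseteq> {\<sigma> j<..m}" by blast
  then have "card (\<sigma> ` ?R) \<le> m - \<sigma> j"
    using card_mono[OF finite_greaterThanAtMost] by fastforce
  moreover have "card (\<sigma> ` ?R) = card ?R"
    using permutes_inj[OF \<sigma>] by (simp add: card_image inj_on_subset)
  ultimately show ?thesis by simp
qed

lemma inv_count_eq_sum_larger_left:
  "inv_count n p = (\<Sum>k\<in>{1..n}. card (larger_left p k))"
proof -
  have "{(i, k). i \<in> {1..n} \<and> k \<in> {1..n} \<and> i < k \<and> p i > p k}
      = prod.swap ` (SIGMA k:{1..n}. larger_left p k)"
    by (force simp: larger_left_def)
  then show ?thesis
    by (simp add: inv_count_def card_image)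
qed

lemma inv_count_Suc_fixed:
  assumes \<sigma>: "\<sigma> permutes {1..m}"
  shows "inv_count (Suc m) \<sigma> = inv_count m \<sigma>"
proof -
  have "larger_left \<sigma> (Suc m) = {}"
    using permutes_atLeastAtMost_le[OF \<sigma>] permutes_fixes_Suc[OF \<sigma>]
    by (fastforce simp: larger_left_def)
  then show ?thesis by (simp add: inv_count_eq_sum_larger_left)
qed

lemma card_larger_left_insert_transpose:
  assumes \<sigma>: "\<sigma> permutes {1..m}" and j: "j \<in> {1..m}" and k: "k \<in> {1..m} - {j}"
  shows "card (larger_left (\<sigma> \<circ> transpose j (Suc m)) k)
    = card (larger_left \<sigma> k) + of_bool (k \<in> larger_right m \<sigma> j)"
proof -
  have "\<sigma> k \<le> m" using permutes_atLeastAtMost_le[OF \<sigma>] k by simp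
  then have "i \<in> larger_left (\<sigma> \<circ> transpose j (Suc m)) k \<longleftrightarrow> i \<in> larger_left \<sigma> k \<or> (j < k \<and> i = j)" for i
    using k j by (cases "i = j") (auto simp: larger_left_def permutes_fixes_Suc[OF \<sigma>])
  then have "larger_left (\<sigma> \<circ> transpose j (Suc m)) k = larger_left \<sigma> k \<union> (if j < k then {j} else {})"
    by auto
  moreover have "\<sigma> k \<noteq> \<sigma> j" using k permutes_inj[OF \<sigma>] by (auto dest: injD)
  then have "j \<notin> larger_left \<sigma> k \<longleftrightarrow> (j < k \<longrightarrow> k \<in> larger_right m \<sigma> j)"
    using k j by (auto simp: larger_left_def larger_right_def)
  ultimately show ?thesis
    using k by (auto simp: card_insert_if larger_right_def)
qed

text \<open>Count inversions by their right end \<open>k\<close>: none end at \<open>j\<close> any more, the new ones ending at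
  \<open>m+1\<close> come from \<open>j\<close> and from the larger entries on either side of \<open>j\<close>, and each other
  \<open>k > j\<close> gains the inversion \<open>(j, k)\<close> iff \<open>\<sigma> j < \<sigma> k\<close>.\<close>
lemma inv_count_Suc_insert:
  assumes \<sigma>: "\<sigma> permutes {1..m}" and j: "j \<in> {1..m}"
  shows "inv_count (Suc m) (\<sigma> \<circ> transpose j (Suc m))
    = inv_count m \<sigma> + 2 * card (larger_right m \<sigma> j) + 1"
proof -
  define \<pi> where "\<pi> = \<sigma> \<circ> transpose j (Suc m)"
  define R where "R = larger_right m \<sigma> j"
  note \<pi>_simps = insert_transpose_apply[OF \<sigma>, where j = j, folded \<pi>_def]
  have le_m: "\<sigma> k \<le> m" if "k \<in> {1..m}" for k using permutes_atLeastAtMost_le[OF \<sigma> that] by simp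
  have at_j: "larger_left \<pi> j = {}"
    using \<pi>_simps j le_m permutes_atLeastAtMost_le[OF permutes_Suc_insert[OF \<sigma> j], folded \<pi>_def]
    by (fastforce simp: larger_left_def)
  have at_end: "larger_left \<pi> (Suc m) = insert j (larger_left \<sigma> j \<union> R)"
    using j le_m[OF j] by (auto simp: larger_left_def R_def larger_right_def \<pi>_simps)
  have "larger_left \<sigma> j \<inter> R = {}" "j \<notin> larger_left \<sigma> j \<union> R"
    by (auto simp: larger_left_def R_def larger_right_def)
  then have "card (larger_left \<pi> (Suc m)) = Suc (card (larger_left \<sigma> j) + card R)"
    unfolding at_end by (simp add: card_Un_disjoint R_def)
  moreover have "R \<subseteq> {1..m} - {j}" using j by (auto simp: R_def larger_right_def)
  then have "(\<Sum>k\<in>{1..m} - {j}. of_bool (k \<in> R) :: nat) = card R"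
    by (simp add: sum.If_cases Int_absorb1)
  ultimately have "inv_count (Suc m) \<pi>
      = Suc (card (larger_left \<sigma> j) + card R) + (\<Sum>k\<in>{1..m} - {j}. card (larger_left \<sigma> k)) + card R"
    using j card_larger_left_insert_transpose[OF \<sigma> j, folded \<pi>_def R_def]
    by (simp add: inv_count_eq_sum_larger_left atLeastAtMostSuc_conv sum.remove at_j sum.distrib)
  moreover have "inv_count m \<sigma> = card (larger_left \<sigma> j) + (\<Sum>k\<in>{1..m} - {j}. card (larger_left \<sigma> k))"
    using j by (simp add: inv_count_eq_sum_larger_left sum.remove)
  ultimately show ?thesis by (simp add: \<pi>_def R_def)
qed

definition dg_excess :: "nat \<Rightarrow> (nat \<Rightarrow> nat) \<Rightarrow> int" where
  "dg_excess n \<pi> = int (disp n \<pi>) - int (inv_count n \<pi>) - int (refl_len n \<pi>)"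

lemma shallow_iff_dg_excess: "shallow n \<pi> \<longleftrightarrow> dg_excess n \<pi> = 0"
  by (simp add: shallow_def dg_excess_def) linarith

lemma dg_excess_Suc_fixed:
  assumes "\<sigma> permutes {1..m}"
  shows "dg_excess (Suc m) \<sigma> = dg_excess m \<sigma>"
  using assms by (simp add: dg_excess_def disp_Suc_fixed inv_count_Suc_fixed refl_len_def cyc_Suc_fixed)

lemma dg_excess_Suc_insert:
  assumes \<sigma>: "\<sigma> permutes {1..m}" and j: "j \<in> {1..m}"
  shows "dg_excess (Suc m) (\<sigma> \<circ> transpose j (Suc m))
    = dg_excess m \<sigma> + 2 * int (m - max j (\<sigma> j) - card (larger_right m \<sigma> j))"
proof -
  have "cyc m \<sigma> \<le> m" using \<sigma> by (intro cyc_le) (auto simp: permutation_permutes)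
  then have "int (refl_len (Suc m) (\<sigma> \<circ> transpose j (Suc m))) = int (refl_len m \<sigma>) + 1"
    by (simp add: refl_len_def cyc_Suc_insert[OF \<sigma> j] of_nat_diff)
  moreover have "max j (\<sigma> j) \<le> m" using j permutes_atLeastAtMost_le[OF \<sigma> j] by simp
  then have "int (m - max j (\<sigma> j) - card (larger_right m \<sigma> j))
      = int m - int (max j (\<sigma> j)) - int (card (larger_right m \<sigma> j))"
    using card_larger_right_le[OF \<sigma> j] by linarith
  ultimately show ?thesis
    using disp_Suc_insert[OF \<sigma> j] inv_count_Suc_insert[OF \<sigma> j]
    unfolding dg_excess_def by simp
qed

theorem dg_excess_nonneg: "\<pi> permutes {1..n} \<Longrightarrow> 0 \<le> dg_excess n \<pi>"
proof (induction n arbitrary: \<pi>)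
  case 0
  then show ?case by (simp add: dg_excess_def disp_def inv_count_def refl_len_def)
next
  case (Suc m)
  from Suc.prems show ?case
  proof (cases rule: permutes_Suc_cases)
    case 1
    then show ?thesis using Suc.IH by (simp add: dg_excess_Suc_fixed)
  next
    case (2 \<sigma> j)
    then show ?thesis
      unfolding 2(3) dg_excess_Suc_insert[OF 2(1,2)] using Suc.IH[OF 2(1)] by simp
  qed
qed

section \<open>Shallow 321-avoiding permutations\<close>

lemma avoids321I:
  assumes "\<And>i j k. 1 \<le> i \<Longrightarrow> i < j \<Longrightarrow> j < k \<Longrightarrow> k \<le> n \<Longrightarrow> p j < p i \<Longrightarrow> p k < p j \<Longrightarrow> False"
  shows "avoids321 n p"
  using assms unfolding avoids321_def by blast

lemma avoids321D:
  "avoids321 n p \<Longrightarrow> 1 \<le> i \<Longrightarrow> i < j \<Longrightarrow> j < k \<Longrightarrow> k \<le> n \<Longrightarrow> p j < p i \<Longrightarrow> p k < p j \<Longrightarrow> False"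
  unfolding avoids321_def by blast

lemma avoids321_Suc_fixed:
  assumes \<sigma>: "\<sigma> permutes {1..m}"
  shows "avoids321 (Suc m) \<sigma> \<longleftrightarrow> avoids321 m \<sigma>"
proof
  assume "avoids321 (Suc m) \<sigma>"
  then show "avoids321 m \<sigma>" by (auto intro!: avoids321I dest: avoids321D)
next
  assume avoid: "avoids321 m \<sigma>"
  show "avoids321 (Suc m) \<sigma>"
  proof (rule avoids321I)
    fix i j k assume ijk: "1 \<le> i" "i < j" "j < k" "k \<le> Suc m" "\<sigma> j < \<sigma> i" "\<sigma> k < \<sigma> j"
    have "k \<noteq> Suc m"
      using ijk permutes_atLeastAtMost_le[OF \<sigma>, of j] permutes_fixes_Suc[OF \<sigma>] by auto
    then have "k \<le> m" using ijk(4) by simp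
    then show False using avoids321D[OF avoid ijk(1-3) _ ijk(5,6)] by simp
  qed
qed

lemma larger_right_empty_if_avoids321:
  assumes \<sigma>: "\<sigma> permutes {1..m}" and j: "j \<in> {1..m}"
    and avoid: "avoids321 (Suc m) (\<sigma> \<circ> transpose j (Suc m))"
  shows "larger_right m \<sigma> j = {}"
proof -
  have False if k: "k \<in> larger_right m \<sigma> j" for k
  proof -
    have "\<sigma> k \<le> m" using k j permutes_atLeastAtMost_le[OF \<sigma>, of k] by (simp add: larger_right_def)
    then show False
      using avoids321D[OF avoid, of j k "Suc m"] k j
      by (simp add: larger_right_def permutes_fixes_Suc[OF \<sigma>])
  qed
  then show ?thesis by blast
qed

lemma avoids321_insert_penultimate:
  assumes \<sigma>: "\<sigma> permutes {1..m}" and m: "1 \<le> m"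
  shows "avoids321 (Suc m) (\<sigma> \<circ> transpose m (Suc m)) \<longleftrightarrow> avoids321 m \<sigma>"
proof -
  define \<pi> where "\<pi> = \<sigma> \<circ> transpose m (Suc m)"
  note \<pi>_simps = insert_transpose_apply[OF \<sigma>, where j = m, folded \<pi>_def]
  have \<pi>_le: "\<pi> k \<le> Suc m" if "k \<in> {1..Suc m}" for k
    using permutes_atLeastAtMost_le[OF permutes_Suc_insert[OF \<sigma>, of m] that] m by (simp add: \<pi>_def)
  show ?thesis unfolding \<pi>_def[symmetric]
  proof
    assume avoid: "avoids321 (Suc m) \<pi>"
    show "avoids321 m \<sigma>"
    proof (rule avoids321I)
      fix p q r assume pqr: "1 \<le> p" "p < q" "q < r" "r \<le> m" "\<sigma> q < \<sigma> p" "\<sigma> r < \<sigma> q"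
      show False
      proof (cases "r = m")
        case True
        then show False using avoids321D[OF avoid, of p q "Suc m"] pqr by (simp add: \<pi>_simps)
      next
        case False
        then show False using avoids321D[OF avoid, of p q r] pqr by (simp add: \<pi>_simps)
      qed
    qed
  next
    assume avoid: "avoids321 m \<sigma>"
    show "avoids321 (Suc m) \<pi>"
    proof (rule avoids321I)
      fix p q r assume pqr: "1 \<le> p" "p < q" "q < r" "r \<le> Suc m" "\<pi> q < \<pi> p" "\<pi> r < \<pi> q"
      have "q \<noteq> m" "r \<noteq> m" using pqr \<pi>_le[of p] by (auto simp: \<pi>_simps)
      then have "p < m" "q < m" using pqr by auto
      then have "\<sigma> q < \<sigma> p" using pqr by (simp add: \<pi>_simps)
      show False
      proof (cases "r = Suc m")
        case True
        then show False using avoids321D[OF avoid, of p q m] pqr \<open>q < m\<close> \<open>\<sigma> q < \<sigma> p\<close>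
          by (simp add: \<pi>_simps)
      next
        case False
        then show False using avoids321D[OF avoid, of p q r] pqr \<open>r \<noteq> m\<close> \<open>\<sigma> q < \<sigma> p\<close>
          by (simp add: \<pi>_simps)
      qed
    qed
  qed
qed

text \<open>Replacing the value \<open>m\<close> by \<open>m+1\<close> and appending \<open>m\<close>.\<close>
lemma avoids321_insert_at_max:
  assumes \<sigma>: "\<sigma> permutes {1..m}" and j: "j \<in> {1..m}" and \<sigma>j: "\<sigma> j = m"
  shows "avoids321 (Suc m) (\<sigma> \<circ> transpose j (Suc m)) \<longleftrightarrow> avoids321 m \<sigma>"
proof -
  define \<pi> where "\<pi> = \<sigma> \<circ> transpose j (Suc m)"
  note \<pi>_simps = insert_transpose_apply[OF \<sigma>, where j = j, folded \<pi>_def]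
  have \<pi>_le: "\<pi> k \<le> Suc m" if "k \<in> {1..Suc m}" for k
    using permutes_atLeastAtMost_le[OF permutes_Suc_insert[OF \<sigma> j] that] by (simp add: \<pi>_def)
  have \<sigma>_lt: "\<sigma> k < m" if "k \<in> {1..m}" "k \<noteq> j" for k
    using that \<sigma>j permutes_atLeastAtMost_le[OF \<sigma> that(1)] permutes_inj[OF \<sigma>]
    by (metis injD le_neq_implies_less)
  show ?thesis unfolding \<pi>_def[symmetric]
  proof
    assume avoid: "avoids321 (Suc m) \<pi>"
    show "avoids321 m \<sigma>"
    proof (rule avoids321I)
      fix p q r assume pqr: "1 \<le> p" "p < q" "q < r" "r \<le> m" "\<sigma> q < \<sigma> p" "\<sigma> r < \<sigma> q"
      have "q \<noteq> j" "r \<noteq> j" using pqr permutes_atLeastAtMost_le[OF \<sigma>, of p] \<sigma>j by auto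
      moreover have "\<sigma> q < \<pi> p"
        using pqr \<sigma>j by (cases "p = j") (simp_all add: \<pi>_simps)
      ultimately show False using avoids321D[OF avoid, of p q r] pqr by (simp add: \<pi>_simps)
    qed
  next
    assume avoid: "avoids321 m \<sigma>"
    show "avoids321 (Suc m) \<pi>"
    proof (rule avoids321I)
      fix p q r assume pqr: "1 \<le> p" "p < q" "q < r" "r \<le> Suc m" "\<pi> q < \<pi> p" "\<pi> r < \<pi> q"
      have "q \<noteq> j" using pqr \<pi>_le[of p] \<pi>_simps(1) by auto
      then have q: "q \<in> {1..m}" "q \<noteq> j" using pqr by auto
      then have \<pi>q: "\<pi> q = \<sigma> q" "\<sigma> q < m" using \<sigma>_lt by (simp_all add: \<pi>_simps)
      moreover have "\<pi> (Suc m) = m" "\<pi> j = Suc m" using \<sigma>j by (simp_all add: \<pi>_simps)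
      ultimately have "r \<noteq> Suc m" "r \<noteq> j" using pqr by auto
      moreover have "\<sigma> q < \<sigma> p"
        using pqr \<pi>q \<sigma>j by (cases "p = j") (simp_all add: \<pi>_simps)
      ultimately show False using avoids321D[OF avoid, of p q r] pqr \<pi>q by (simp add: \<pi>_simps)
    qed
  qed
qed

definition shallow321 :: "nat \<Rightarrow> (nat \<Rightarrow> nat) set" where
  "shallow321 n = {\<pi>. \<pi> permutes {1..n} \<and> shallow n \<pi> \<and> avoids321 n \<pi>}"

lemma shallow321_permutes: "\<pi> \<in> shallow321 n \<Longrightarrow> \<pi> permutes {1..n}"
  by (simp add: shallow321_def)

lemma finite_shallow321: "finite (shallow321 n)"
  by (rule finite_subset[of _ "{\<pi>. \<pi> permutes {1..n}}"]) (auto simp: shallow321_def finite_permutations)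

lemma shallow321_Suc_fixed:
  assumes "\<sigma> permutes {1..m}"
  shows "\<sigma> \<in> shallow321 (Suc m) \<longleftrightarrow> \<sigma> \<in> shallow321 m"
proof -
  have "\<sigma> permutes {1..Suc m}" using assms by (rule permutes_subset) auto
  then show ?thesis
    using assms by (simp add: shallow321_def shallow_iff_dg_excess dg_excess_Suc_fixed avoids321_Suc_fixed)
qed

text \<open>By \<open>dg_excess_Suc_insert\<close> the insertion preserves shallowness iff
  \<open>card (larger_right m \<sigma> j) = m - max j (\<sigma> j)\<close>, and 321-avoidance makes the left side 0.\<close>
theorem shallow321_Suc_insert_iff:
  assumes \<sigma>: "\<sigma> permutes {1..m}" and j: "j \<in> {1..m}"
  shows "\<sigma> \<circ> transpose j (Suc m) \<in> shallow321 (Suc m) \<longleftrightarrow> \<sigma> \<in> shallow321 m \<and> (j = m \<or> \<sigma> j = m)"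
proof -
  define \<pi> where "\<pi> = \<sigma> \<circ> transpose j (Suc m)"
  let ?R = "larger_right m \<sigma> j"
  have max_le: "max j (\<sigma> j) \<le> m" using j permutes_atLeastAtMost_le[OF \<sigma> j] by simp
  have shallow_iff: "shallow (Suc m) \<pi> \<longleftrightarrow> shallow m \<sigma> \<and> m - max j (\<sigma> j) - card ?R = 0"
    using dg_excess_Suc_insert[OF \<sigma> j] dg_excess_nonneg[OF \<sigma>]
    unfolding shallow_iff_dg_excess \<pi>_def by linarith
  have avoid_iff: "avoids321 (Suc m) \<pi> \<longleftrightarrow> avoids321 m \<sigma>" if "j = m \<or> \<sigma> j = m"
    using that avoids321_insert_penultimate[OF \<sigma>] avoids321_insert_at_max[OF \<sigma> j] j
    by (auto simp: \<pi>_def)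
  have \<pi>: "\<pi> permutes {1..Suc m}" unfolding \<pi>_def by (rule permutes_Suc_insert[OF \<sigma> j])
  show ?thesis unfolding \<pi>_def[symmetric]
  proof
    assume "\<pi> \<in> shallow321 (Suc m)"
    then have "shallow (Suc m) \<pi>" "avoids321 (Suc m) \<pi>" by (simp_all add: shallow321_def)
    moreover from this(2) have "?R = {}"
      unfolding \<pi>_def by (rule larger_right_empty_if_avoids321[OF \<sigma> j])
    ultimately have "shallow m \<sigma>" "j = m \<or> \<sigma> j = m"
      using shallow_iff max_le by (auto simp: max_def split: if_splits)
    then show "\<sigma> \<in> shallow321 m \<and> (j = m \<or> \<sigma> j = m)"
      using avoid_iff \<open>avoids321 (Suc m) \<pi>\<close> \<sigma> by (simp add: shallow321_def)
  next
    assume "\<sigma> \<in> shallow321 m \<and> (j = m \<or> \<sigma> j = m)"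
    moreover from this have "max j (\<sigma> j) = m" using max_le by auto
    ultimately show "\<pi> \<in> shallow321 (Suc m)"
      using shallow_iff avoid_iff \<pi> by (simp add: shallow321_def)
  qed
qed

lemma shallow321_Suc_cases:
  assumes \<pi>: "\<pi> \<in> shallow321 (Suc m)"
  obtains "\<pi> (Suc m) = Suc m" | "\<pi> m = Suc m" | "\<pi> (Suc m) = m" "\<pi> m \<noteq> Suc m"
proof -
  have perm: "\<pi> permutes {1..Suc m}" using \<pi> by (rule shallow321_permutes)
  from perm show ?thesis
  proof (cases rule: permutes_Suc_cases)
    case 1
    then show ?thesis using that(1) by (simp add: permutes_fixes_Suc)
  next
    case (2 \<sigma> j)
    have \<pi>j: "\<pi> j = Suc m" and \<pi>_last: "\<pi> (Suc m) = \<sigma> j"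
      unfolding 2(3) by (rule insert_transpose_apply(1)[OF 2(1)], rule insert_transpose_apply(2)[OF 2(1)])
    have "j = m \<or> \<sigma> j = m"
      using shallow321_Suc_insert_iff[OF 2(1,2)] \<pi> 2(3) by simp
    moreover have "\<pi> m \<noteq> Suc m" if "j \<noteq> m"
      using that \<pi>j permutes_inj[OF perm] by (metis injD)
    ultimately show ?thesis
      using that(2,3) \<pi>j \<pi>_last by (cases "j = m") simp_all
  qed
qed

section \<open>Descents\<close>

definition descent_set :: "nat \<Rightarrow> (nat \<Rightarrow> nat) \<Rightarrow> nat set" where
  "descent_set n p = {i. 1 \<le> i \<and> i < n \<and> p (Suc i) < p i}"

lemma descents_eq_card_descent_set: "descents n p = card (descent_set n p)"
  by (simp add: descents_def descent_set_def)

lemma finite_descent_set [simp]: "finite (descent_set n p)"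
  by (rule finite_subset[of _ "{..<n}"]) (auto simp: descent_set_def)

lemma descents_Suc_fixed:
  assumes \<sigma>: "\<sigma> permutes {1..m}"
  shows "descents (Suc m) \<sigma> = descents m \<sigma>"
proof -
  have "\<not> \<sigma> (Suc m) < \<sigma> m"
    using permutes_fixes_Suc[OF \<sigma>] permutes_atLeastAtMost_le[OF \<sigma>, of m] permutes_not_in[OF \<sigma>, of m]
    by (cases "m = 0") auto
  then have "descent_set (Suc m) \<sigma> = descent_set m \<sigma>"
    by (auto simp: descent_set_def less_Suc_eq)
  then show ?thesis by (simp add: descents_eq_card_descent_set)
qed

lemma descents_less: "1 \<le> n \<Longrightarrow> descents n p < n"
proof -
  assume "1 \<le> n"
  moreover have "descent_set n p \<subseteq> {1..<n}" by (auto simp: descent_set_def)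
  then have "card (descent_set n p) \<le> n - 1" using card_mono[of "{1..<n}"] by fastforce
  ultimately show ?thesis by (simp add: descents_eq_card_descent_set)
qed

definition final_descent :: "nat \<Rightarrow> (nat \<Rightarrow> nat) \<Rightarrow> bool" where
  "final_descent n p \<longleftrightarrow> 2 \<le> n \<and> p n < p (n - 1)"

lemma descents_insert_penultimate:
  assumes \<sigma>: "\<sigma> permutes {1..m}" and m: "1 \<le> m"
  shows "descents (Suc m) (\<sigma> \<circ> transpose m (Suc m)) + of_bool (final_descent m \<sigma>)
    = Suc (descents m \<sigma>)"
proof -
  define \<pi> where "\<pi> = \<sigma> \<circ> transpose m (Suc m)"
  note \<pi>_simps = insert_transpose_apply[OF \<sigma>, where j = m, folded \<pi>_def]
  have \<sigma>_le: "\<sigma> k \<le> m" if "k \<in> {1..m}" for k using permutes_atLeastAtMost_le[OF \<sigma> that] by simp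
  have "i \<in> descent_set (Suc m) \<pi> \<longleftrightarrow> i \<in> insert m (descent_set m \<sigma> - {m - 1})" for i
  proof -
    consider "i = m" | "i = m - 1" "i \<noteq> m" | "Suc i < m" | "m < i" by linarith
    then show ?thesis
    proof cases
      case 2
      then have "1 \<le> i \<Longrightarrow> \<sigma> i \<le> m" using \<sigma>_le[of i] by simp
      then show ?thesis using 2 m by (force simp: descent_set_def \<pi>_simps)
    qed (use m \<sigma>_le[of m] in \<open>auto simp: descent_set_def \<pi>_simps\<close>)
  qed
  then have "descent_set (Suc m) \<pi> = insert m (descent_set m \<sigma> - {m - 1})" by blast
  moreover have "m - 1 \<in> descent_set m \<sigma> \<longleftrightarrow> final_descent m \<sigma>"
    using m by (auto simp: descent_set_def final_descent_def)
  moreover have "m \<notin> descent_set m \<sigma>" by (simp add: descent_set_def)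
  ultimately show ?thesis
    using card_Suc_Diff1[of "descent_set m \<sigma>" "m - 1"]
    by (cases "final_descent m \<sigma>") (simp_all add: descents_eq_card_descent_set flip: \<pi>_def)
qed

lemma descents_insert_at_max:
  assumes \<sigma>: "\<sigma> permutes {1..m}" and j: "j \<in> {1..m}" "j \<noteq> m" and \<sigma>j: "\<sigma> j = m"
  shows "descents (Suc m) (\<sigma> \<circ> transpose j (Suc m)) = descents m \<sigma>"
proof -
  define \<pi> where "\<pi> = \<sigma> \<circ> transpose j (Suc m)"
  note \<pi>_simps = insert_transpose_apply[OF \<sigma>, where j = j, folded \<pi>_def]
  have \<sigma>_lt: "\<sigma> k < m" if "k \<in> {1..m}" "k \<noteq> j" for k
    using that \<sigma>j permutes_atLeastAtMost_le[OF \<sigma> that(1)] permutes_inj[OF \<sigma>]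
    by (metis injD le_neq_implies_less)
  text \<open>On \<open>{1..m}\<close>, \<open>\<pi>\<close> is \<open>\<sigma>\<close> followed by the order embedding that sends \<open>m\<close> to \<open>m+1\<close>.\<close>
  have order: "\<pi> b < \<pi> a \<longleftrightarrow> \<sigma> b < \<sigma> a" if "a \<in> {1..m}" "b \<in> {1..m}" for a b
    using that \<sigma>j \<sigma>_lt[of a] \<sigma>_lt[of b] by (cases "a = j"; cases "b = j") (simp_all add: \<pi>_simps)
  have "m \<notin> descent_set (Suc m) \<pi>"
    using \<sigma>_lt[of m] j \<sigma>j by (simp add: descent_set_def \<pi>_simps)
  then have "descent_set (Suc m) \<pi> = descent_set m \<sigma>"
    using order by (auto simp: descent_set_def less_Suc_eq)
  then show ?thesis by (simp add: descents_eq_card_descent_set \<pi>_def)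
qed

section \<open>Descent polynomials and the generating function\<close>

lemma bij_betw_shallow321_insert_penultimate:
  assumes m: "1 \<le> m"
  shows "bij_betw (\<lambda>\<sigma>. \<sigma> \<circ> transpose m (Suc m)) (shallow321 m) {\<pi> \<in> shallow321 (Suc m). \<pi> m = Suc m}"
    (is "bij_betw ?f ?A ?B")
proof -
  have mm: "m \<in> {1..m}" using m by simp
  have fwd: "?f \<sigma> \<in> ?B" if "\<sigma> \<in> ?A" for \<sigma>
    using that shallow321_Suc_insert_iff[OF shallow321_permutes mm]
      insert_transpose_apply(1)[OF shallow321_permutes] by auto
  have bwd: "?f \<pi> \<in> ?A" if \<pi>: "\<pi> \<in> ?B" for \<pi>
  proof -
    have perm: "\<pi> permutes {1..Suc m}" using \<pi> shallow321_permutes by blast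
    have "\<pi> (Suc m) \<noteq> \<pi> m" using permutes_inj[OF perm] by (simp add: inj_eq)
    then have "\<pi> (Suc m) \<noteq> Suc m" using \<pi> by simp
    moreover have "inv \<pi> (Suc m) = m" using \<pi> permutes_inv_eq[OF perm] by simp
    ultimately have "?f \<pi> permutes {1..m}" "\<pi> = ?f (?f \<pi>)"
      using permutes_Suc_decompose[OF perm] by simp_all
    then show "?f \<pi> \<in> ?A"
      using shallow321_Suc_insert_iff[of "?f \<pi>" m m] mm \<pi> by auto
  qed
  have "?f (?f p) = p" for p by (simp add: fun_eq_iff)
  then show ?thesis
    by (intro bij_betw_byWitness[where f' = ?f]) (use fwd bwd in blast)+
qed

lemma bij_betw_shallow321_insert_at_max:
  "bij_betw (\<lambda>\<sigma>. \<sigma> \<circ> transpose (inv \<sigma> m) (Suc m)) {\<sigma> \<in> shallow321 m. \<sigma> m \<noteq> m}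
    {\<pi> \<in> shallow321 (Suc m). \<pi> (Suc m) = m \<and> \<pi> m \<noteq> Suc m}"
    (is "bij_betw ?f ?A ?B")
proof -
  let ?g = "\<lambda>\<pi>. \<pi> \<circ> transpose (inv \<pi> (Suc m)) (Suc m)"
  have fwd: "?f \<sigma> \<in> ?B \<and> ?g (?f \<sigma>) = \<sigma>" if \<sigma>_in: "\<sigma> \<in> ?A" for \<sigma>
  proof -
    have \<sigma>: "\<sigma> permutes {1..m}" using \<sigma>_in shallow321_permutes by blast
    note j = permutes_position_of_max[OF \<sigma>] \<sigma>_in
    have "\<sigma> m \<le> m" using j permutes_atLeastAtMost_le[OF \<sigma>, of m] by simp
    then show ?thesis
      using shallow321_Suc_insert_iff[OF \<sigma> j(1)] j inv_insert_transpose[OF \<sigma> j(1)]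
      by (simp add: insert_transpose_apply[OF \<sigma>] fun_eq_iff)
  qed
  have bwd: "?g \<pi> \<in> ?A \<and> ?f (?g \<pi>) = \<pi>" if \<pi>: "\<pi> \<in> ?B" for \<pi>
  proof -
    define j where "j = inv \<pi> (Suc m)"
    define \<sigma> where "\<sigma> = \<pi> \<circ> transpose j (Suc m)"
    have perm: "\<pi> permutes {1..Suc m}" using \<pi> shallow321_permutes by blast
    have j: "j \<in> {1..m}" and \<sigma>: "\<sigma> permutes {1..m}" and \<pi>_eq: "\<pi> = \<sigma> \<circ> transpose j (Suc m)"
      using permutes_Suc_decompose[OF perm] \<pi> by (simp_all add: j_def \<sigma>_def)
    have "\<pi> j = Suc m" unfolding j_def by (rule permutes_inverses(1)[OF perm])
    then have "j \<noteq> m" using \<pi> by auto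
    moreover have \<sigma>j: "\<sigma> j = m" using \<pi> by (simp add: \<sigma>_def j_def permutes_inverses(1)[OF perm])
    ultimately have "\<sigma> m \<noteq> m" using permutes_inj[OF \<sigma>] by (metis injD)
    moreover have "\<sigma> \<in> shallow321 m" using shallow321_Suc_insert_iff[OF \<sigma> j] \<pi> \<pi>_eq by simp
    moreover have "inv \<sigma> m = j" using permutes_inv_eq[OF \<sigma>] \<sigma>j by simp
    then have "?f \<sigma> = \<pi>" using \<pi>_eq by simp
    moreover have "?g \<pi> = \<sigma>" by (simp add: \<sigma>_def j_def)
    ultimately show ?thesis by simp
  qed
  show ?thesis
    by (intro bij_betw_byWitness[where f' = ?g]) (use fwd bwd in blast)+
qed

definition descent_poly :: "real \<Rightarrow> nat \<Rightarrow> (nat \<Rightarrow> nat) set \<Rightarrow> real" where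
  "descent_poly x n S = (\<Sum>\<pi>\<in>S. x ^ descents n \<pi>)"

lemma descent_poly_Suc_last_fixed:
  "descent_poly x (Suc m) {\<pi> \<in> shallow321 (Suc m). \<pi> (Suc m) = Suc m} = descent_poly x m (shallow321 m)"
proof -
  have "\<pi> \<in> shallow321 (Suc m) \<and> \<pi> (Suc m) = Suc m \<longleftrightarrow> \<pi> \<in> shallow321 m" for \<pi>
  proof
    assume "\<pi> \<in> shallow321 (Suc m) \<and> \<pi> (Suc m) = Suc m"
    then show "\<pi> \<in> shallow321 m"
      using permutes_Suc_fixed_last[OF shallow321_permutes] shallow321_Suc_fixed by blast
  next
    assume "\<pi> \<in> shallow321 m"
    then show "\<pi> \<in> shallow321 (Suc m) \<and> \<pi> (Suc m) = Suc m"
      using shallow321_permutes shallow321_Suc_fixed permutes_fixes_Suc by blast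
  qed
  then have "{\<pi> \<in> shallow321 (Suc m). \<pi> (Suc m) = Suc m} = shallow321 m" by blast
  moreover have "descents (Suc m) \<sigma> = descents m \<sigma>" if "\<sigma> \<in> shallow321 m" for \<sigma>
    using shallow321_permutes[OF that] by (rule descents_Suc_fixed)
  ultimately show ?thesis
    unfolding descent_poly_def by simp
qed

lemma descent_poly_Suc_max_penultimate:
  assumes m: "1 \<le> m"
  shows "descent_poly x (Suc m) {\<pi> \<in> shallow321 (Suc m). \<pi> m = Suc m}
    = x * descent_poly x m (shallow321 m) - (x - 1) * descent_poly x m {\<sigma> \<in> shallow321 m. final_descent m \<sigma>}"
proof -
  have "descent_poly x (Suc m) {\<pi> \<in> shallow321 (Suc m). \<pi> m = Suc m}
      = (\<Sum>\<sigma>\<in>shallow321 m. x ^ descents (Suc m) (\<sigma> \<circ> transpose m (Suc m)))"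
    unfolding descent_poly_def by (rule sum.reindex_bij_betw[OF bij_betw_shallow321_insert_penultimate[OF m], symmetric])
  also have "\<dots> = (\<Sum>\<sigma>\<in>shallow321 m.
      x * x ^ descents m \<sigma> - (x - 1) * (if final_descent m \<sigma> then x ^ descents m \<sigma> else 0))"
  proof (rule sum.cong[OF refl])
    fix \<sigma> assume "\<sigma> \<in> shallow321 m"
    then have "descents (Suc m) (\<sigma> \<circ> transpose m (Suc m)) + of_bool (final_descent m \<sigma>) = Suc (descents m \<sigma>)"
      using descents_insert_penultimate[OF shallow321_permutes m] by simp
    then show "x ^ descents (Suc m) (\<sigma> \<circ> transpose m (Suc m))
        = x * x ^ descents m \<sigma> - (x - 1) * (if final_descent m \<sigma> then x ^ descents m \<sigma> else 0)"
      by (cases "final_descent m \<sigma>") (simp_all add: algebra_simps)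
  qed
  finally show ?thesis
    by (simp add: descent_poly_def sum_subtractf sum_distrib_left sum.inter_filter finite_shallow321)
qed

lemma descent_poly_Suc_old_max_last:
  "descent_poly x (Suc m) {\<pi> \<in> shallow321 (Suc m). \<pi> (Suc m) = m \<and> \<pi> m \<noteq> Suc m}
    = descent_poly x m {\<sigma> \<in> shallow321 m. \<sigma> m \<noteq> m}"
proof -
  have "descents (Suc m) (\<sigma> \<circ> transpose (inv \<sigma> m) (Suc m)) = descents m \<sigma>"
    if \<sigma>_in: "\<sigma> \<in> {\<sigma> \<in> shallow321 m. \<sigma> m \<noteq> m}" for \<sigma>
  proof -
    have \<sigma>: "\<sigma> permutes {1..m}" using \<sigma>_in shallow321_permutes by blast
    note j = permutes_position_of_max[OF \<sigma>] \<sigma>_in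
    show ?thesis using descents_insert_at_max[OF \<sigma> j(1-3)] j(4) by simp
  qed
  then show ?thesis
    unfolding descent_poly_def sum.reindex_bij_betw[OF bij_betw_shallow321_insert_at_max, symmetric]
    by simp
qed

lemma final_descent_shallow321_Suc_iff:
  assumes m: "1 \<le> m" and \<pi>: "\<pi> \<in> shallow321 (Suc m)"
  shows "final_descent (Suc m) \<pi> \<longleftrightarrow> \<pi> m = Suc m"
proof -
  have perm: "\<pi> permutes {1..Suc m}" using \<pi> shallow321_permutes by blast
  have le: "\<pi> m \<le> Suc m" "\<pi> (Suc m) \<le> Suc m"
    using m permutes_atLeastAtMost_le[OF perm, of m] permutes_atLeastAtMost_le[OF perm, of "Suc m"] by simp_all
  have ne: "\<pi> m \<noteq> \<pi> (Suc m)" using permutes_inj[OF perm] by (simp add: inj_eq)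
  from \<pi> show ?thesis
    by (cases rule: shallow321_Suc_cases) (use m le ne in \<open>auto simp: final_descent_def\<close>)
qed

lemma descent_poly_shallow321_Suc:
  assumes m: "1 \<le> m"
  shows "descent_poly x (Suc m) (shallow321 (Suc m))
    = descent_poly x m (shallow321 m)
      + (x * descent_poly x m (shallow321 m) - (x - 1) * descent_poly x m {\<sigma> \<in> shallow321 m. final_descent m \<sigma>})
      + (descent_poly x m (shallow321 m) - descent_poly x m {\<sigma> \<in> shallow321 m. \<sigma> m = m})"
proof -
  let ?S = "shallow321 (Suc m)"
  define A where "A = {\<pi> \<in> ?S. \<pi> (Suc m) = Suc m}"
  define B where "B = {\<pi> \<in> ?S. \<pi> m = Suc m}"
  define C where "C = {\<pi> \<in> ?S. \<pi> (Suc m) = m \<and> \<pi> m \<noteq> Suc m}"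
  have "?S = A \<union> B \<union> C"
    by (auto simp: A_def B_def C_def elim: shallow321_Suc_cases)
  moreover have "\<pi> m \<noteq> Suc m" if "\<pi> \<in> A" for \<pi>
  proof -
    have "inj \<pi>" using that by (auto simp: A_def intro: permutes_inj shallow321_permutes)
    then have "\<pi> m \<noteq> \<pi> (Suc m)" by (simp add: inj_eq)
    then show ?thesis using that by (simp add: A_def)
  qed
  then have "A \<inter> B = {}" by (auto simp: B_def)
  moreover have "(A \<union> B) \<inter> C = {}" by (auto simp: A_def B_def C_def)
  moreover have "finite A" "finite B" "finite C"
    by (simp_all add: A_def B_def C_def finite_shallow321)
  ultimately have "descent_poly x (Suc m) ?S
      = descent_poly x (Suc m) A + descent_poly x (Suc m) B + descent_poly x (Suc m) C"
    by (simp add: descent_poly_def sum.union_disjoint)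
  moreover have "descent_poly x m {\<sigma> \<in> shallow321 m. \<sigma> m \<noteq> m}
      = descent_poly x m (shallow321 m) - descent_poly x m {\<sigma> \<in> shallow321 m. \<sigma> m = m}"
  proof -
    have "{\<sigma> \<in> shallow321 m. \<sigma> m \<noteq> m} = shallow321 m - {\<sigma>. \<sigma> m = m}"
      "{\<sigma> \<in> shallow321 m. \<sigma> m = m} = shallow321 m \<inter> {\<sigma>. \<sigma> m = m}" by auto
    then show ?thesis
      using sum.Int_Diff[OF finite_shallow321, of "\<lambda>\<sigma>. x ^ descents m \<sigma>" m "{\<sigma>. \<sigma> m = m}"]
      by (simp add: descent_poly_def)
  qed
  ultimately show ?thesis
    by (simp add: A_def B_def C_def descent_poly_Suc_last_fixed descent_poly_Suc_max_penultimate[OF m]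
        descent_poly_Suc_old_max_last)
qed

lemma descent_poly_shallow321_Suc_final_descent:
  assumes m: "1 \<le> m"
  shows "descent_poly x (Suc m) {\<pi> \<in> shallow321 (Suc m). final_descent (Suc m) \<pi>}
    = x * descent_poly x m (shallow321 m) - (x - 1) * descent_poly x m {\<sigma> \<in> shallow321 m. final_descent m \<sigma>}"
proof -
  have "{\<pi> \<in> shallow321 (Suc m). final_descent (Suc m) \<pi>} = {\<pi> \<in> shallow321 (Suc m). \<pi> m = Suc m}"
    using final_descent_shallow321_Suc_iff[OF m] by blast
  then show ?thesis by (simp add: descent_poly_Suc_max_penultimate[OF m])
qed

lemma shallow321_one: "shallow321 1 = {id}"
proof -
  have "shallow 1 id" "avoids321 1 id"
    by (simp_all add: shallow_def inv_count_eq_sum_larger_left larger_left_def refl_len_def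
        cyc_def disp_def avoids321_def)
  then show ?thesis by (auto simp: shallow321_def)
qed

lemma descent_poly_shallow321_recurrence:
  fixes x :: real
  defines "w n \<equiv> descent_poly x n (shallow321 n)"
  shows "w (k + 4) = 3 * w (k + 3) + (2 * x - 3) * w (k + 2) + (1 - x) * w (k + 1)"
proof -
  define d where "d n = descent_poly x n {\<sigma> \<in> shallow321 n. final_descent n \<sigma>}" for n
  define f where "f n = descent_poly x n {\<sigma> \<in> shallow321 n. \<sigma> n = n}" for n
  have w_Suc: "w (m + 1) = (2 + x) * w m - (x - 1) * d m - f m" if "1 \<le> m" for m
    using descent_poly_shallow321_Suc[OF that, of x] by (simp add: w_def d_def f_def algebra_simps)
  have d_Suc: "d (m + 1) = x * w m - (x - 1) * d m" if "1 \<le> m" for m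
    using descent_poly_shallow321_Suc_final_descent[OF that, of x] by (simp add: w_def d_def)
  have f_Suc: "f (m + 1) = w m" for m
    using descent_poly_Suc_last_fixed[of x m] by (simp add: w_def f_def)
  have d2: "(x - 1) * d (k + 2) = (2 + x) * w (k + 2) - w (k + 3) - w (k + 1)"
    using w_Suc[of "k + 2"] f_Suc[of "k + 1"] by (simp add: eval_nat_numeral)
  have w4: "w (k + 4) = (2 + x) * w (k + 3) - (x - 1) * d (k + 3) - w (k + 2)"
    using w_Suc[of "k + 3"] f_Suc[of "k + 2"] by (simp add: eval_nat_numeral)
  have d3: "d (k + 3) = x * w (k + 2) - (x - 1) * d (k + 2)"
    using d_Suc[of "k + 2"] by (simp add: eval_nat_numeral)
  have "w (k + 4) = (2 + x) * w (k + 3) - (x - 1) * x * w (k + 2) + (x - 1) * ((x - 1) * d (k + 2)) - w (k + 2)"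
    unfolding w4 d3 by (simp add: algebra_simps)
  also have "\<dots> = 3 * w (k + 3) + (2 * x - 3) * w (k + 2) + (1 - x) * w (k + 1)"
    unfolding d2 by (simp add: algebra_simps)
  finally show ?thesis .
qed

lemma descent_poly_shallow321_initial:
  fixes x :: real
  shows "descent_poly x 1 (shallow321 1) = 1"
    and "descent_poly x 2 (shallow321 2) = 1 + x"
    and "descent_poly x 3 (shallow321 3) = 1 + 4 * x"
proof -
  have base: "descent_poly x 1 (shallow321 1) = 1"
    "descent_poly x 1 {\<sigma> \<in> shallow321 1. final_descent 1 \<sigma>} = 0"
    "descent_poly x 1 {\<sigma> \<in> shallow321 1. \<sigma> 1 = 1} = 1"
    unfolding shallow321_one by (simp_all add: descent_poly_def descents_def final_descent_def Collect_conv_if)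
  then show "descent_poly x 1 (shallow321 1) = 1" by simp
  show two: "descent_poly x 2 (shallow321 2) = 1 + x"
    using descent_poly_shallow321_Suc[of 1 x] base by (simp add: numeral_eq_Suc)
  have "descent_poly x 2 {\<sigma> \<in> shallow321 2. final_descent 2 \<sigma>} = x"
    using descent_poly_shallow321_Suc_final_descent[of 1 x] base by (simp add: numeral_eq_Suc)
  moreover have "descent_poly x 2 {\<sigma> \<in> shallow321 2. \<sigma> 2 = 2} = 1"
    using descent_poly_Suc_last_fixed[of x 1] base by (simp add: numeral_eq_Suc)
  ultimately show "descent_poly x 3 (shallow321 3) = 1 + 4 * x"
    using descent_poly_shallow321_Suc[of 2 x] two by (simp add: numeral_eq_Suc algebra_simps)
qed

lemma fps_nth_A_gf:
  "fps_nth (A_gf x) n = (if n = 0 then 0 else descent_poly x n (shallow321 n))"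
proof (cases "n = 0")
  case False
  have "a_cnt n k = card {\<pi> \<in> shallow321 n. descents n \<pi> = k}" for k
    by (simp add: a_cnt_def shallow321_def conj_assoc)
  then have "(\<Sum>k<n. real (a_cnt n k) * x ^ k)
      = (\<Sum>k<n. \<Sum>\<pi>\<in>shallow321 n. if descents n \<pi> = k then x ^ k else 0)"
    by (simp add: sum.inter_filter[OF finite_shallow321, symmetric])
  also have "\<dots> = (\<Sum>\<pi>\<in>shallow321 n. \<Sum>k<n. if descents n \<pi> = k then x ^ k else 0)"
    by (rule sum.swap)
  also have "\<dots> = descent_poly x n (shallow321 n)"
    unfolding descent_poly_def by (rule sum.cong) (use descents_less False in auto)
  finally show ?thesis using False by (simp add: A_gf_def)
qed (simp add: A_gf_def)

lemma fps_mult_cubic_recurrence: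
  fixes f :: "'a::comm_ring_1 fps"
  assumes rec: "\<And>n. fps_nth f (n + 4) = c1 * fps_nth f (n + 3) + c2 * fps_nth f (n + 2) + c3 * fps_nth f (n + 1)"
  shows "f * (1 - fps_const c1 * fps_X - fps_const c2 * fps_X ^ 2 - fps_const c3 * fps_X ^ 3)
    = fps_const (fps_nth f 0) + fps_const (fps_nth f 1 - c1 * fps_nth f 0) * fps_X
      + fps_const (fps_nth f 2 - c1 * fps_nth f 1 - c2 * fps_nth f 0) * fps_X ^ 2
      + fps_const (fps_nth f 3 - c1 * fps_nth f 2 - c2 * fps_nth f 1 - c3 * fps_nth f 0) * fps_X ^ 3"
    (is "f * ?p = ?q")
proof (rule fps_ext)
  fix n
  have "f * ?p = f - fps_const c1 * (f * fps_X ^ 1) - fps_const c2 * (f * fps_X ^ 2)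
      - fps_const c3 * (f * fps_X ^ 3)"
    by (simp add: algebra_simps)
  then have lhs: "fps_nth (f * ?p) n = fps_nth f n - c1 * (if n < 1 then 0 else fps_nth f (n - 1))
      - c2 * (if n < 2 then 0 else fps_nth f (n - 2)) - c3 * (if n < 3 then 0 else fps_nth f (n - 3))"
    by (simp only: fps_sub_nth fps_mult_left_const_nth fps_X_power_mult_right_nth)
  show "fps_nth (f * ?p) n = fps_nth ?q n"
  proof (cases "n < 4")
    case True
    then have "n = 0 \<or> n = 1 \<or> n = 2 \<or> n = 3" by auto
    then show ?thesis unfolding lhs by (elim disjE) (simp_all add: fps_X_power_nth)
  next
    case False
    then obtain k where "n = k + 4" by (metis add.commute le_Suc_ex not_less)
    then show ?thesis unfolding lhs using rec[of k] by (simp add: fps_X_power_nth algebra_simps)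
  qed
qed

lemma A_gf_mult_denominator:
  "A_gf x * (1 - fps_const 3 * fps_X - fps_const (2 * x - 3) * fps_X ^ 2 - fps_const (1 - x) * fps_X ^ 3)
    = fps_X + fps_const (x - 2) * fps_X ^ 2 + fps_const (1 - x) * fps_X ^ 3"
proof -
  have rec: "fps_nth (A_gf x) (n + 4) = 3 * fps_nth (A_gf x) (n + 3)
      + (2 * x - 3) * fps_nth (A_gf x) (n + 2) + (1 - x) * fps_nth (A_gf x) (n + 1)" for n
    using descent_poly_shallow321_recurrence[of x n] by (simp add: fps_nth_A_gf)
  have init: "fps_nth (A_gf x) 0 = 0" "fps_nth (A_gf x) 1 = 1"
      "fps_nth (A_gf x) 2 = 1 + x" "fps_nth (A_gf x) 3 = 1 + 4 * x"
    using descent_poly_shallow321_initial[of x] by (simp_all add: fps_nth_A_gf)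
  show ?thesis
    unfolding fps_mult_cubic_recurrence[OF rec] init by (simp add: algebra_simps)
qed

theorem theorem6p3:
  fixes x :: real
  shows "A_gf x =
    (fps_X - 2 * fps_X ^ 2 + fps_const x * fps_X ^ 2 + fps_X ^ 3 - fps_const x * fps_X ^ 3) /
    (1 - 3 * fps_X + 3 * fps_X ^ 2 - 2 * fps_const x * fps_X ^ 2 - fps_X ^ 3 + fps_const x * fps_X ^ 3)"
    (is "_ = ?num / ?den")
proof -
  have den: "?den = 1 - fps_const 3 * fps_X - fps_const (2 * x - 3) * fps_X ^ 2 - fps_const (1 - x) * fps_X ^ 3"
    by (rule fps_ext) (simp add: numeral_fps_const)
  have num: "?num = fps_X + fps_const (x - 2) * fps_X ^ 2 + fps_const (1 - x) * fps_X ^ 3"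
    by (rule fps_ext) (simp add: numeral_fps_const algebra_simps)
  have "A_gf x * ?den = ?num"
    unfolding den num by (rule A_gf_mult_denominator)
  moreover have "?den \<noteq> 0"
  proof
    assume "?den = 0"
    then have "fps_nth ?den 0 = 0" by simp
    then show False by simp
  qed
  ultimately show ?thesis by (metis nonzero_mult_div_cancel_right)
qed

end
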